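(* Let $A(x)$ be an Alltop function on a finite field $\mathbb{F}_q$ of characteristic $p$. For $a,b\in\mathbb{F}_q$ let $\vec{v}_{ab}=\frac{1}{\sqrt{q}}\big(\omega_p^{\mathrm{tr}(A(x+a)+b(x+a))}\big)_{x\in\mathbb{F}_q}$, and let $C_A=\{\vec{v}_{ab}:a,b\in\mathbb{F}_q\}\cup E$, where $E$ is the standard basis of $\mathbb{C}^q$. Then $C_A$ is a $(q^2+q,q)$ signal set with $I_{\max}(C_A)=\frac{1}{\sqrt{q}}$.
   Context: $\omega_p=e^{2\pi i/p}$ and $\mathrm{tr}$ is the absolute trace from $\mathbb{F}_q$ to $\mathbb{F}_p$. For $f:\mathbb{F}_q\to\mathbb{F}_q$, $\Delta_{f,a}(x)=f(x+a)-f(x)$; $f$ is planar if $x\mapsto\Delta_{f,a}(x)$ is a bijection for all $a\neq0$; $A$ is an Alltop function if $\Delta_{A,a}$ is planar for all $a\neq0$. An $(N,K)$ signal set is a set of $N$ unit vectors $\{\vec{v}_i\}$ in $\mathbb{C}^K$, and $I_{\max}=\max_{i<j}|\langle\vec{v}_i|\vec{v}_j\rangle|$. *)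

theory Defs
  imports "HOL-Analysis.Analysis"
begin

text \<open>Finite fields are modelled by a type of class {field, finite}; p = CHAR('a), q = CARD('a).\<close>

definition field_degree :: "'a::{field,finite} itself \<Rightarrow> nat" where
  "field_degree T = (THE n. CARD('a) = CHAR('a) ^ n)"

definition abs_trace :: "'a::{field,finite} \<Rightarrow> 'a" where
  "abs_trace x = (\<Sum>i<field_degree TYPE('a). x ^ (CHAR('a) ^ i))"

definition prime_field_rep :: "'a::{field,finite} \<Rightarrow> nat" where
  "prime_field_rep y = (THE k. k < CHAR('a) \<and> of_nat k = y)"

definition omega_tr :: "'a::{field,finite} \<Rightarrow> complex" where
  "omega_tr y = exp (2 * pi * \<i> * of_nat (prime_field_rep (abs_trace y)) / of_nat CHAR('a))"

definition difference :: "('a::ab_group_add \<Rightarrow> 'a) \<Rightarrow> 'a \<Rightarrow> 'a \<Rightarrow> 'a" where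
  "difference f a x = f (x + a) - f x"

definition planar :: "('a::{field,finite} \<Rightarrow> 'a) \<Rightarrow> bool" where
  "planar f \<longleftrightarrow> (\<forall>a. a \<noteq> 0 \<longrightarrow> bij (difference f a))"

definition alltop :: "('a::{field,finite} \<Rightarrow> 'a) \<Rightarrow> bool" where
  "alltop A \<longleftrightarrow> (\<forall>a. a \<noteq> 0 \<longrightarrow> planar (difference A a))"

text \<open>Vectors in C^q are functions F_q -> complex (coordinates indexed by F_q).
  Hermitian inner product, conjugate-linear in the first argument.\<close>
definition cinner :: "('a::finite \<Rightarrow> complex) \<Rightarrow> ('a \<Rightarrow> complex) \<Rightarrow> complex" where
  "cinner u v = (\<Sum>x\<in>UNIV. cnj (u x) * v x)"

definition vnorm :: "('a::finite \<Rightarrow> complex) \<Rightarrow> real" where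
  "vnorm v = sqrt (cmod (cinner v v))"

definition signal_set :: "('a::finite \<Rightarrow> complex) set \<Rightarrow> nat \<Rightarrow> nat \<Rightarrow> bool" where
  "signal_set C N K \<longleftrightarrow> K = CARD('a) \<and> card C = N \<and> (\<forall>v\<in>C. vnorm v = 1)"

definition I_max :: "('a::finite \<Rightarrow> complex) set \<Rightarrow> real" where
  "I_max C = Max {cmod (cinner u v) | u v. u \<in> C \<and> v \<in> C \<and> u \<noteq> v}"

definition std_basis :: "('a::finite \<Rightarrow> complex) set" where
  "std_basis = {(\<lambda>y. if y = x then 1 else 0) | x. True}"

definition alltop_vec :: "('a::{field,finite} \<Rightarrow> 'a) \<Rightarrow> 'a \<Rightarrow> 'a \<Rightarrow> 'a \<Rightarrow> complex" where
  "alltop_vec A a b = (\<lambda>x. omega_tr (A (x + a) + b * (x + a)) / sqrt (real CARD('a)))"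

definition alltop_set :: "('a::{field,finite} \<Rightarrow> 'a) \<Rightarrow> ('a \<Rightarrow> complex) set" where
  "alltop_set A = {alltop_vec A a b | a b. True} \<union> std_basis"

end

theory Submission
  imports Defs "HOL-Computational_Algebra.Computational_Algebra" "HOL-Number_Theory.Cong"
begin

text \<open>
  For \<open>a \<noteq> a'\<close> the inner product of \<open>v(a,b)\<close> and \<open>v(a',b')\<close> is, up to a factor of modulus
  \<open>1/q\<close>, the character sum over \<open>y\<close> of \<open>\<omega>(\<Delta>(A,a'-a)(y) + (b'-b) y)\<close>. Its argument is planar,
  since \<open>A\<close> is Alltop and adding a linear term preserves planarity, and for planar \<open>g\<close> the sum
  of \<open>\<omega>(g y)\<close> has modulus exactly \<open>sqrt q\<close>: expanding its squared modulus leaves, for every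
  shift \<open>e \<noteq> 0\<close>, a character sum over the bijection \<open>\<Delta>(g,e)\<close>, which vanishes. For
  \<open>a = a'\<close> distinct vectors are orthogonal, and every coordinate of \<open>v(a,b)\<close> has modulus
  \<open>1/sqrt q\<close>, which is thus its inner product with each standard basis vector.

  Most of the work is to see that \<open>\<omega> = \<omega>\<^sub>p\<^sup>t\<^sup>r\<close> is a nontrivial additive character: the
  trace takes values in the prime field because \<open>q = p^n\<close> gives \<open>tr(x)^p = tr(x)\<close>, and it is not
  identically zero because it is a polynomial of degree \<open>p^(n-1) < q\<close>.
\<close>

section \<open>Finite fields\<close>

lemma prime_CHAR_finite_field: "prime CHAR('a::{field,finite})"
  by (rule prime_CHAR_semidom) (rule finite_imp_CHAR_pos, simp)

lemma CHAR_finite_field_ge_2: "CHAR('a::{field,finite}) \<ge> 2"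
  using prime_CHAR_finite_field prime_ge_2_nat by blast

lemma CARD_finite_field_ge_2: "CARD('a::{field,finite}) \<ge> 2"
proof -
  have "card {0::'a, 1} \<le> CARD('a)" by (rule card_mono) auto
  then show ?thesis by simp
qed

lemma of_nat_eq_iff_mod_CHAR:
  "(of_nat x :: 'a::semiring_1_cancel) = of_nat y \<longleftrightarrow> x mod CHAR('a) = y mod CHAR('a)"
  by (simp add: of_nat_eq_iff_cong_CHAR cong_def)

lemma of_nat_mod_CHAR [simp]: "(of_nat (x mod CHAR('a)) :: 'a::semiring_1_cancel) = of_nat x"
  by (simp add: of_nat_eq_iff_mod_CHAR)

lemma of_nat_CHAR_minus_1:
  assumes "CHAR('a::ring_1) > 0"
  shows "(of_nat (CHAR('a) - 1) :: 'a) = -1"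
  using assms by (simp add: of_nat_diff)

lemma of_nat_power_CHAR:
  assumes "prime CHAR('a::comm_semiring_1)"
  shows "(of_nat k :: 'a) ^ CHAR('a) = of_nat k"
proof (induction k)
  case 0
  show ?case using prime_gt_0_nat[OF assms] by (simp add: power_0_left)
next
  case (Suc k)
  have "(of_nat k + 1 :: 'a) ^ CHAR('a) = of_nat k ^ CHAR('a) + 1 ^ CHAR('a)"
    by (rule freshmans_dream[OF assms refl])
  with Suc show ?case by (simp add: add.commute)
qed

lemma of_nat_invertible_prime_CHAR:
  assumes "prime CHAR('a::semiring_1_cancel)" "\<not> CHAR('a) dvd j"
  obtains i where "(of_nat i :: 'a) * of_nat j = 1"
proof -
  have "coprime j CHAR('a)"
    using assms by (metis coprime_commute prime_imp_coprime)
  then obtain i where "[j * i = 1] (mod CHAR('a))"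
    using cong_solve_coprime_nat by auto
  then have "(of_nat (j * i) :: 'a) = of_nat 1"
    by (simp only: of_nat_eq_iff_cong_CHAR)
  then show ?thesis by (intro that[of i]) (simp add: mult.commute)
qed

lemma finite_field_power_CARD: "(x :: 'a::{field,finite}) ^ CARD('a) = x"
proof (cases "x = 0")
  case False
  let ?U = "UNIV - {0::'a}"
  have "x ^ card ?U * (\<Prod>y\<in>?U. y) = (\<Prod>y\<in>?U. x * y)"
    by (simp only: prod.distrib prod_constant)
  also have "\<dots> = (\<Prod>y\<in>?U. y)"
    by (rule prod.reindex_bij_witness[of _ "\<lambda>y. y / x" "\<lambda>y. x * y"]) (use False in auto)
  finally have "x ^ card ?U = 1"
    by (simp only: mult_cancel_right2) simp
  moreover have "CARD('a) = Suc (card ?U)"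
    using finite_UNIV_card_ge_0[where 'a='a] by (simp add: card_Diff_singleton)
  ultimately show ?thesis by (simp del: card_Diff_insert)
qed simp

text \<open>Subspaces over the prime field; its elements are written as \<open>of_nat k\<close>.\<close>
definition prime_field_subspace :: "'a::semiring_1 set \<Rightarrow> bool" where
  "prime_field_subspace S \<longleftrightarrow>
     0 \<in> S \<and> (\<forall>x\<in>S. \<forall>y\<in>S. x + y \<in> S) \<and> (\<forall>x\<in>S. \<forall>k. of_nat k * x \<in> S)"

lemma prime_field_subspace_diff:
  fixes S :: "'a::{field,finite} set"
  assumes "prime_field_subspace S" "x \<in> S" "y \<in> S"
  shows "x - y \<in> S"
proof -
  have "of_nat (CHAR('a) - 1) * y \<in> S"
    using assms unfolding prime_field_subspace_def by blast
  then have "- y \<in> S"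
    using CHAR_finite_field_ge_2[where 'a='a] by (simp add: of_nat_CHAR_minus_1)
  then show ?thesis
    using assms unfolding prime_field_subspace_def by (metis diff_conv_add_uminus)
qed

lemma inj_on_prime_field_subspace_extend:
  fixes S :: "'a::{field,finite} set"
  assumes S: "prime_field_subspace S" and b: "b \<notin> S"
  shows "inj_on (\<lambda>(s, k). s + of_nat k * b) (S \<times> {..<CHAR('a)})"
proof -
  have same_k: "k = k'" if "s \<in> S" "s' \<in> S" "k' \<le> k" "k < CHAR('a)"
    and eq: "s + of_nat k * b = s' + of_nat k' * b" for s s' k k'
  proof (rule ccontr)
    assume "k \<noteq> k'"
    with that have "\<not> CHAR('a) dvd (k - k')" by (simp add: nat_dvd_not_less)
    then obtain i where i: "(of_nat i :: 'a) * of_nat (k - k') = 1"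
      using of_nat_invertible_prime_CHAR prime_CHAR_finite_field by blast
    have "of_nat (k - k') * b = s' - s"
      using eq \<open>k' \<le> k\<close> by (simp add: of_nat_diff algebra_simps)
    then have "b = of_nat i * (s' - s)"
      using i by (metis mult.assoc mult_1)
    moreover have "s' - s \<in> S" using prime_field_subspace_diff S that by blast
    ultimately show False
      using S b unfolding prime_field_subspace_def by simp
  qed
  then show ?thesis
  proof (intro inj_onI, clarify)
    fix s k s' k'
    assume "s \<in> S" "k < CHAR('a)" "s' \<in> S" "k' < CHAR('a)"
      and eq: "s + of_nat k * b = s' + of_nat k' * b"
    then have "k = k'"
      using same_k[of s s' k' k] same_k[of s' s k k'] by (cases "k' \<le> k") auto
    with eq show "s = s' \<and> k = k'" by simp
  qed
qed

lemma prime_field_subspace_extend: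
  fixes S :: "'a::{field,finite} set"
  assumes S: "prime_field_subspace S"
  shows "prime_field_subspace ((\<lambda>(s, k). s + of_nat k * b) ` (S \<times> {..<CHAR('a)}))"
    (is "prime_field_subspace ?T")
proof -
  have mem: "s + of_nat k * b \<in> ?T" if "s \<in> S" for s k
    using that CHAR_finite_field_ge_2[where 'a='a]
    by (intro image_eqI[of _ _ "(s, k mod CHAR('a))"]) auto
  show ?thesis
    unfolding prime_field_subspace_def
  proof (intro conjI ballI allI)
    show "0 \<in> ?T" using mem[of 0 0] S by (simp add: prime_field_subspace_def)
  next
    fix x y assume "x \<in> ?T" "y \<in> ?T"
    then obtain s k s' k' where "x = s + of_nat k * b" "y = s' + of_nat k' * b" "s \<in> S" "s' \<in> S"
      by auto
    moreover from this have "s + s' \<in> S" using S by (simp add: prime_field_subspace_def)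
    ultimately show "x + y \<in> ?T"
      using mem[of "s + s'" "k + k'"] by (simp add: algebra_simps)
  next
    fix x c assume "x \<in> ?T"
    then obtain s k where "x = s + of_nat k * b" "s \<in> S" by auto
    moreover from this have "of_nat c * s \<in> S" using S by (simp add: prime_field_subspace_def)
    ultimately show "of_nat c * x \<in> ?T"
      using mem[of "of_nat c * s" "c * k"] by (simp add: algebra_simps)
  qed
qed

lemma CARD_finite_field_prime_power: "\<exists>n. CARD('a::{field,finite}) = CHAR('a) ^ n"
proof -
  have "\<exists>n. CARD('a) = card S * CHAR('a) ^ n" if "prime_field_subspace S" for S :: "'a set"
    using that
  proof (induction "CARD('a) - card S" arbitrary: S rule: less_induct)
    case less
    show ?case
    proof (cases "S = UNIV")
      case False
      then obtain b where b: "b \<notin> S" by auto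
      let ?T = "(\<lambda>(s, k). s + of_nat k * b) ` (S \<times> {..<CHAR('a)})"
      have card_T: "card ?T = card S * CHAR('a)"
        using card_image[OF inj_on_prime_field_subspace_extend[OF less.prems b]]
        by (simp add: card_cartesian_product)
      have "card S > 0"
        using less.prems by (auto simp: prime_field_subspace_def card_gt_0_iff)
      with card_T have "card S < card ?T"
        using CHAR_finite_field_ge_2[where 'a='a] by simp
      moreover have "card ?T \<le> CARD('a)" by (rule card_mono) auto
      ultimately obtain n where "CARD('a) = card ?T * CHAR('a) ^ n"
        using less.hyps[OF _ prime_field_subspace_extend[OF less.prems]] by fastforce
      then show ?thesis by (intro exI[of _ "Suc n"]) (simp add: card_T)
    qed (intro exI[of _ 0], simp)
  qed
  from this[of "{0}"] show ?thesis by (simp add: prime_field_subspace_def)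
qed

lemma CARD_eq_CHAR_power_field_degree:
  "CARD('a::{field,finite}) = CHAR('a) ^ field_degree TYPE('a)"
proof -
  obtain n where n: "CARD('a) = CHAR('a) ^ n"
    using CARD_finite_field_prime_power by blast
  have "field_degree TYPE('a) = n"
    unfolding field_degree_def
    using n CHAR_finite_field_ge_2[where 'a='a] by (auto simp: power_inject_exp)
  with n show ?thesis by simp
qed

lemma power_CHAR_eq_self_imp_of_nat:
  fixes y :: "'a::idom"
  assumes p: "prime CHAR('a)" and y: "y ^ CHAR('a) = y"
  obtains k where "k < CHAR('a)" "y = of_nat k"
proof -
  let ?p = "CHAR('a)"
  define P :: "'a poly" where "P = monom 1 ?p - [:0, 1:]"
  have p2: "?p \<ge> 2" using prime_ge_2_nat[OF p] .
  have roots: "poly P x = 0 \<longleftrightarrow> x ^ ?p = x" for x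
    by (simp add: P_def poly_monom)
  have "coeff P ?p = 1" using p2 by (simp add: P_def coeff_pCons split: nat.split)
  then have P: "P \<noteq> 0" by auto
  have "degree P \<le> ?p"
    unfolding P_def
    by (rule degree_diff_le) (use p2 in \<open>auto intro: degree_monom_le simp: degree_pCons_eq_if\<close>)
  then have card_roots: "card {x. poly P x = 0} \<le> ?p"
    using card_poly_roots_bound[OF P] by simp
  have sub: "of_nat ` {..<?p} \<subseteq> {x. poly P x = 0}"
    using of_nat_power_CHAR[OF p] by (auto simp: roots)
  have "card (of_nat ` {..<?p} :: 'a set) = ?p"
    by (subst card_image) (auto simp: inj_on_def of_nat_eq_iff_mod_CHAR)
  then have "of_nat ` {..<?p} = {x. poly P x = 0}"
    using card_roots card_mono[OF poly_roots_finite[OF P] sub]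
    by (intro card_subset_eq[OF poly_roots_finite[OF P] sub]) simp
  then show ?thesis
    using y that by (auto simp: roots)
qed

lemma nonzero_poly_has_nonroot:
  fixes P :: "'a::{idom,finite} poly"
  assumes "P \<noteq> 0" "degree P < CARD('a)"
  obtains x where "poly P x \<noteq> 0"
proof -
  have "card {x. poly P x = 0} < CARD('a)"
    using card_poly_roots_bound[OF assms(1)] assms(2) by simp
  then have "{x. poly P x = 0} \<noteq> UNIV" by auto
  then show ?thesis using that by auto
qed

section \<open>The trace and its additive character\<close>

lemma abs_trace_add: "abs_trace (x + y :: 'a::{field,finite}) = abs_trace x + abs_trace y"
  unfolding abs_trace_def
  by (simp add: freshmans_dream'[OF prime_CHAR_finite_field refl] sum.distrib)

lemma abs_trace_power_CHAR: "abs_trace (x :: 'a::{field,finite}) ^ CHAR('a) = abs_trace x"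
proof -
  let ?p = "CHAR('a)" and ?n = "field_degree TYPE('a)"
  define f where "f i = x ^ (?p ^ i)" for i
  have "f ?n = f 0"
    using CARD_eq_CHAR_power_field_degree[where 'a='a] finite_field_power_CARD[of x]
    by (simp add: f_def)
  have "abs_trace x ^ ?p = (\<Sum>i<?n. f i ^ ?p)"
    unfolding abs_trace_def f_def by (rule freshmans_dream_sum[OF prime_CHAR_finite_field refl])
  also have "\<dots> = (\<Sum>i<?n. f (Suc i))"
    by (simp add: f_def power_mult[symmetric] mult.commute)
  also have "\<dots> = (\<Sum>i<?n. f i)"
    using \<open>f ?n = f 0\<close> sum.lessThan_Suc_shift[of f ?n] by (simp add: add.commute)
  finally show ?thesis unfolding abs_trace_def f_def .
qed

lemma abs_trace_in_prime_field:
  obtains k where "k < CHAR('a)" "abs_trace (x :: 'a::{field,finite}) = of_nat k"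
  using power_CHAR_eq_self_imp_of_nat[OF prime_CHAR_finite_field abs_trace_power_CHAR] .

lemma abs_trace_nonzero: "\<exists>y::'a::{field,finite}. abs_trace y \<noteq> 0"
proof -
  let ?p = "CHAR('a)" and ?n = "field_degree TYPE('a)"
  have p2: "?p \<ge> 2" by (rule CHAR_finite_field_ge_2)
  obtain m where m: "?n = Suc m"
    using CARD_eq_CHAR_power_field_degree[where 'a='a] CARD_finite_field_ge_2[where 'a='a]
    by (cases ?n) auto
  define T :: "'a poly" where "T = (\<Sum>i<?n. monom 1 (?p ^ i))"
  have "coeff T (?p ^ m) = (\<Sum>i<?n. if i = m then 1 else 0)"
    unfolding T_def coeff_sum using p2 by (intro sum.cong) (auto simp: power_inject_exp)
  then have "T \<noteq> 0" using m by auto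
  moreover have "degree T < CARD('a)"
  proof -
    have "degree T \<le> ?p ^ m"
      unfolding T_def using m p2
      by (intro degree_sum_le) (auto intro: order.trans[OF degree_monom_le] power_increasing)
    moreover have "?p ^ m < ?p ^ ?n" using m p2 by simp
    ultimately show ?thesis
      using CARD_eq_CHAR_power_field_degree[where 'a='a] by simp
  qed
  ultimately obtain y where "poly T y \<noteq> 0" by (rule nonzero_poly_has_nonroot)
  then show ?thesis
    by (auto simp: T_def poly_sum poly_monom abs_trace_def)
qed

lemma prime_field_rep_of_nat: "prime_field_rep (of_nat k :: 'a::{field,finite}) = k mod CHAR('a)"
  unfolding prime_field_rep_def
proof (rule the_equality)
  show "k mod CHAR('a) < CHAR('a) \<and> (of_nat (k mod CHAR('a)) :: 'a) = of_nat k"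
    using CHAR_finite_field_ge_2[where 'a='a] by simp
qed (auto simp: of_nat_eq_iff_mod_CHAR)

lemma omega_tr_eq_exp:
  assumes "abs_trace (x :: 'a::{field,finite}) = of_nat k"
  shows "omega_tr x = exp (2 * pi * \<i> * of_nat k / of_nat CHAR('a))"
  using complex_root_unity_eq[of "CHAR('a)" "k mod CHAR('a)" k] CHAR_finite_field_ge_2[where 'a='a]
  by (simp add: omega_tr_def assms prime_field_rep_of_nat)

lemma omega_tr_add: "omega_tr (x + y :: 'a::{field,finite}) = omega_tr x * omega_tr y"
proof -
  obtain a b where a: "abs_trace x = of_nat a" and b: "abs_trace y = of_nat b"
    by (metis abs_trace_in_prime_field)
  then have ab: "abs_trace (x + y) = of_nat (a + b)" by (simp add: abs_trace_add)
  show ?thesis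
    unfolding omega_tr_eq_exp[OF a] omega_tr_eq_exp[OF b] omega_tr_eq_exp[OF ab]
    by (simp add: add_divide_distrib distrib_left flip: exp_add)
qed

lemma norm_omega_tr [simp]: "cmod (omega_tr (x :: 'a::{field,finite})) = 1"
proof -
  obtain k where "abs_trace x = of_nat k" by (metis abs_trace_in_prime_field)
  moreover have "2 * pi * \<i> * of_nat k / of_nat CHAR('a) = \<i> * of_real (2 * pi * k / CHAR('a))"
    by simp
  ultimately show ?thesis by (simp only: omega_tr_eq_exp norm_exp_i_times)
qed

lemma omega_tr_zero [simp]: "omega_tr (0 :: 'a::{field,finite}) = 1"
proof -
  have "abs_trace (0 :: 'a) = of_nat 0"
    unfolding abs_trace_def using CHAR_finite_field_ge_2[where 'a='a] by (simp add: power_0_left)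
  from omega_tr_eq_exp[OF this] show ?thesis by simp
qed

lemma omega_tr_uminus: "omega_tr (- x :: 'a::{field,finite}) = cnj (omega_tr x)"
proof -
  have "omega_tr (- x) * omega_tr x = 1"
    by (simp flip: omega_tr_add)
  moreover have "cnj (omega_tr x) * omega_tr x = 1"
    using complex_norm_square[of "omega_tr x"] by (simp add: mult.commute)
  ultimately show ?thesis
    by (metis mult_cancel_right zero_neq_one mult_zero_left)
qed

lemma omega_tr_diff: "omega_tr (x - y :: 'a::{field,finite}) = omega_tr x * cnj (omega_tr y)"
  using omega_tr_add[of x "- y"] by (simp add: omega_tr_uminus)

lemma omega_tr_nontrivial: "\<exists>y::'a::{field,finite}. omega_tr y \<noteq> 1"
proof -
  obtain y :: 'a where y: "abs_trace y \<noteq> 0" using abs_trace_nonzero by blast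
  obtain k where k: "k < CHAR('a)" "abs_trace y = of_nat k" by (rule abs_trace_in_prime_field)
  with y have "\<not> CHAR('a) dvd k" by (auto simp: dvd_imp_le)
  then have "omega_tr y \<noteq> 1"
    using complex_root_unity_eq_1[of "CHAR('a)" k] CHAR_finite_field_ge_2[where 'a='a]
    by (simp add: omega_tr_eq_exp[OF k(2)])
  then show ?thesis ..
qed

section \<open>Character sums\<close>

lemma sum_UNIV_shift: "(\<Sum>x\<in>UNIV. g (x + a)) = (\<Sum>x\<in>UNIV. g (x :: 'a::{ab_group_add,finite}))"
  by (rule sum.reindex_bij_betw, rule bij_betwI[of _ _ _ "\<lambda>x. x - a"]) auto

lemma sum_omega_tr_UNIV: "(\<Sum>x\<in>UNIV. omega_tr (x :: 'a::{field,finite})) = 0"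
proof -
  obtain y :: 'a where y: "omega_tr y \<noteq> 1" using omega_tr_nontrivial by blast
  have "(\<Sum>x\<in>UNIV. omega_tr (x :: 'a)) = (\<Sum>x\<in>UNIV. omega_tr (x + y))"
    by (rule sum_UNIV_shift[symmetric])
  also have "\<dots> = (\<Sum>x\<in>UNIV. omega_tr (x :: 'a)) * omega_tr y"
    by (simp add: omega_tr_add sum_distrib_right)
  finally show ?thesis using y by simp
qed

lemma sum_omega_tr_bij:
  assumes "bij (g :: 'a::{field,finite} \<Rightarrow> 'a)"
  shows "(\<Sum>x\<in>UNIV. omega_tr (g x)) = 0"
  using sum.reindex_bij_betw[OF assms, of omega_tr] by (simp add: sum_omega_tr_UNIV)

lemma sum_omega_tr_linear:
  assumes "(c :: 'a::{field,finite}) \<noteq> 0"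
  shows "(\<Sum>x\<in>UNIV. omega_tr (c * x)) = 0"
  using assms by (intro sum_omega_tr_bij bij_betwI[of _ _ _ "\<lambda>x. x / c"]) auto

lemma planar_add_linear:
  assumes "planar f"
  shows "planar (\<lambda>x. f x + c * x)"
  unfolding planar_def
proof (intro allI impI)
  fix a :: 'a assume "a \<noteq> 0"
  have "bij (\<lambda>y. y + c * a)" by (rule bij_betwI[of _ _ _ "\<lambda>y. y - c * a"]) auto
  with \<open>a \<noteq> 0\<close> assms have "bij ((\<lambda>y. y + c * a) \<circ> difference f a)"
    unfolding planar_def by (intro bij_comp) auto
  then have "bij (\<lambda>x. difference f a x + c * a)" by (simp add: comp_def)
  moreover have "difference (\<lambda>x. f x + c * x) a = (\<lambda>x. difference f a x + c * a)"
    by (auto simp: difference_def algebra_simps)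
  ultimately show "bij (difference (\<lambda>x. f x + c * x) a)" by simp
qed

text \<open>Expanding \<open>|S|\<^sup>2\<close> as a double sum and substituting \<open>y = z + e\<close>, the inner sum over \<open>z\<close>
  is a character sum over the bijection \<open>difference f e\<close> unless \<open>e = 0\<close>.\<close>
lemma norm_sum_omega_tr_planar:
  fixes f :: "'a::{field,finite} \<Rightarrow> 'a"
  assumes "planar f"
  shows "(cmod (\<Sum>x\<in>UNIV. omega_tr (f x)))\<^sup>2 = real CARD('a)"
proof -
  let ?S = "\<Sum>x\<in>UNIV. omega_tr (f x)"
  have inner: "(\<Sum>z\<in>UNIV. omega_tr (difference f e z)) = (if e = 0 then of_nat CARD('a) else 0)"
    for e
  proof (cases "e = 0")
    case False
    then show ?thesis using assms sum_omega_tr_bij[of "difference f e"] by (simp add: planar_def)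
  qed (simp add: difference_def)
  have "?S * cnj ?S = (\<Sum>y\<in>UNIV. \<Sum>z\<in>UNIV. omega_tr (f y - f z))"
    by (simp add: cnj_sum sum_product omega_tr_diff)
  also have "\<dots> = (\<Sum>z\<in>UNIV. \<Sum>y\<in>UNIV. omega_tr (f y - f z))"
    by (rule sum.swap)
  also have "\<dots> = (\<Sum>z\<in>UNIV. \<Sum>e\<in>UNIV. omega_tr (difference f e z))"
    using sum_UNIV_shift[of "\<lambda>y. omega_tr (f y - f _)"]
    by (simp add: difference_def add.commute)
  also have "\<dots> = of_nat CARD('a)"
    by (subst sum.swap) (simp add: inner)
  finally have "complex_of_real ((cmod ?S)\<^sup>2) = of_nat CARD('a)"
    by (simp only: complex_norm_square)
  then show ?thesis by (metis of_real_eq_iff of_real_of_nat_eq)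
qed

section \<open>The Alltop signal set\<close>

lemma cinner_alltop_vec:
  fixes A :: "'a::{field,finite} \<Rightarrow> 'a"
  shows "cinner (alltop_vec A a b) (alltop_vec A a' b') =
    omega_tr (b' * (a' - a)) / of_nat CARD('a) *
      (\<Sum>y\<in>UNIV. omega_tr (difference A (a' - a) y + (b' - b) * y))"
proof -
  define U where "U x = A (x + a) + b * (x + a)" for x
  define V where "V x = A (x + a') + b' * (x + a')" for x
  have sqrt_sq: "complex_of_real (sqrt (real CARD('a))) * complex_of_real (sqrt (real CARD('a)))
      = of_nat CARD('a)"
    by (simp flip: of_real_mult)
  have "cinner (alltop_vec A a b) (alltop_vec A a' b') =
      (\<Sum>x\<in>UNIV. omega_tr (V x - U x) / of_nat CARD('a))"
    unfolding cinner_def alltop_vec_def U_def [symmetric] V_def [symmetric]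
    by (simp add: omega_tr_diff complex_cnj_divide mult.commute sqrt_sq)
  also have "\<dots> = (\<Sum>y\<in>UNIV. omega_tr (V (y - a) - U (y - a)) / of_nat CARD('a))"
    using sum_UNIV_shift[of "\<lambda>y. omega_tr (V (y - a) - U (y - a)) / of_nat CARD('a)" a] by simp
  also have "\<dots> = (\<Sum>y\<in>UNIV. omega_tr (b' * (a' - a)) / of_nat CARD('a) *
      omega_tr (difference A (a' - a) y + (b' - b) * y))"
  proof -
    have "V (y - a) - U (y - a) = (difference A (a' - a) y + (b' - b) * y) + b' * (a' - a)" for y
      unfolding U_def V_def difference_def by (simp add: algebra_simps)
    then show ?thesis by (simp add: omega_tr_add mult_ac)
  qed
  finally show ?thesis by (simp add: sum_distrib_left)
qed

lemma norm_cinner_alltop_vec: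
  fixes A :: "'a::{field,finite} \<Rightarrow> 'a"
  assumes "alltop A"
  shows "cmod (cinner (alltop_vec A a b) (alltop_vec A a' b')) =
     (if a = a' then (if b = b' then 1 else 0) else 1 / sqrt (real CARD('a)))"
proof -
  let ?q = "real CARD('a)"
  let ?S = "\<Sum>y\<in>UNIV. omega_tr (difference A (a' - a) y + (b' - b) * y)"
  have "cmod (cinner (alltop_vec A a b) (alltop_vec A a' b')) = cmod ?S / ?q"
    by (simp add: cinner_alltop_vec norm_mult norm_divide)
  also have "\<dots> = (if a = a' then (if b = b' then 1 else 0) else 1 / sqrt ?q)"
  proof (cases "a = a'")
    case True
    then have "?S = (\<Sum>y\<in>UNIV. omega_tr ((b' - b) * y))" by (simp add: difference_def)
    with True show ?thesis by (simp add: sum_omega_tr_linear)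
  next
    case False
    with assms have "planar (\<lambda>y. difference A (a' - a) y + (b' - b) * y)"
      unfolding alltop_def by (simp add: planar_add_linear)
    then have "cmod ?S = sqrt ?q"
      using norm_sum_omega_tr_planar real_sqrt_unique norm_ge_zero by metis
    moreover have "sqrt ?q / ?q = 1 / sqrt ?q" by (simp add: field_simps)
    ultimately show ?thesis using False by simp
  qed
  finally show ?thesis .
qed

lemma norm_alltop_vec_apply:
  fixes A :: "'a::{field,finite} \<Rightarrow> 'a"
  shows "cmod (alltop_vec A a b x) = 1 / sqrt (real CARD('a))"
  by (simp add: alltop_vec_def norm_divide)

definition basis_vec :: "'a::finite \<Rightarrow> 'a \<Rightarrow> complex" where
  "basis_vec x = (\<lambda>y. if y = x then 1 else 0)"

lemma std_basis_eq_range_basis_vec: "std_basis = range basis_vec"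
  unfolding std_basis_def basis_vec_def by auto

lemma basis_vec_apply: "basis_vec x y = (if y = x then 1 else 0)"
  by (simp add: basis_vec_def)

lemma basis_vec_eq_iff [simp]: "basis_vec x = basis_vec y \<longleftrightarrow> x = y"
  by (metis basis_vec_apply zero_neq_one)

lemma cinner_basis_vec_left [simp]: "cinner (basis_vec x) v = v x"
proof -
  have "cinner (basis_vec x) v = (\<Sum>y\<in>UNIV. if y = x then v y else 0)"
    unfolding cinner_def basis_vec_apply by (intro sum.cong) auto
  then show ?thesis by simp
qed

lemma cinner_basis_vec_right [simp]: "cinner v (basis_vec x) = cnj (v x)"
proof -
  have "cinner v (basis_vec x) = (\<Sum>y\<in>UNIV. if y = x then cnj (v y) else 0)"
    unfolding cinner_def basis_vec_apply by (intro sum.cong) auto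
  then show ?thesis by simp
qed

lemma inv_sqrt_CARD_finite_field_less_1: "1 / sqrt (real CARD('a::{field,finite})) < 1"
  using CARD_finite_field_ge_2[where 'a='a] by simp

lemma alltop_vec_neq_basis_vec:
  fixes A :: "'a::{field,finite} \<Rightarrow> 'a"
  shows "alltop_vec A a b \<noteq> basis_vec x"
proof
  assume "alltop_vec A a b = basis_vec x"
  then have "cmod (alltop_vec A a b x) = 1" by (simp add: basis_vec_apply)
  then show False
    using norm_alltop_vec_apply[of A a b x] inv_sqrt_CARD_finite_field_less_1[where 'a='a] by simp
qed

lemma alltop_set_eq:
  "alltop_set A = range (case_prod (alltop_vec A)) \<union> range basis_vec"
  unfolding alltop_set_def std_basis_eq_range_basis_vec by auto

lemma inj_alltop_vec:
  assumes "alltop A"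
  shows "inj (case_prod (alltop_vec A))"
proof (rule injI, clarify)
  fix a b a' b' assume "alltop_vec A a b = alltop_vec A a' b'"
  then have "cmod (cinner (alltop_vec A a b) (alltop_vec A a' b')) = 1"
    using norm_cinner_alltop_vec[OF assms, of a' b' a' b'] by simp
  then show "a = a' \<and> b = b'"
    using norm_cinner_alltop_vec[OF assms, of a b a' b'] inv_sqrt_CARD_finite_field_less_1[where 'a='a]
    by (auto split: if_splits)
qed

lemma card_alltop_set:
  fixes A :: "'a::{field,finite} \<Rightarrow> 'a"
  assumes "alltop A"
  shows "card (alltop_set A) = CARD('a)^2 + CARD('a)"
proof -
  have "card (range (case_prod (alltop_vec A))) = card (UNIV \<times> UNIV :: ('a \<times> 'a) set)"
    by (simp add: card_image[OF inj_alltop_vec[OF assms]])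
  also have "\<dots> = CARD('a)^2"
    by (simp only: card_cartesian_product power2_eq_square)
  finally have "card (range (case_prod (alltop_vec A))) = CARD('a)^2" .
  moreover have "card (range (basis_vec :: 'a \<Rightarrow> 'a \<Rightarrow> complex)) = CARD('a)"
    by (simp add: card_image inj_on_def)
  moreover have "range (case_prod (alltop_vec A)) \<inter> range basis_vec = {}"
    using alltop_vec_neq_basis_vec by fastforce
  ultimately show ?thesis
    unfolding alltop_set_eq by (simp add: card_Un_disjoint)
qed

lemma vnorm_alltop_set:
  assumes "alltop A" "v \<in> alltop_set A"
  shows "vnorm v = 1"
  using assms norm_cinner_alltop_vec[OF assms(1)]
  by (auto simp: alltop_set_eq vnorm_def basis_vec_apply)

lemma norm_cinner_alltop_set_le:
  fixes A :: "'a::{field,finite} \<Rightarrow> 'a"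
  assumes "alltop A" "u \<in> alltop_set A" "v \<in> alltop_set A" "u \<noteq> v"
  shows "cmod (cinner u v) \<le> 1 / sqrt (real CARD('a))"
  using assms norm_cinner_alltop_vec[OF assms(1)]
  by (auto simp: alltop_set_eq norm_alltop_vec_apply basis_vec_apply)

lemma I_max_eqI:
  assumes "finite C"
    and "\<And>u v. u \<in> C \<Longrightarrow> v \<in> C \<Longrightarrow> u \<noteq> v \<Longrightarrow> cmod (cinner u v) \<le> m"
    and "u \<in> C" "v \<in> C" "u \<noteq> v" "cmod (cinner u v) = m"
  shows "I_max C = m"
  unfolding I_max_def
proof (rule Max_eqI)
  have "{cmod (cinner u v) |u v. u \<in> C \<and> v \<in> C \<and> u \<noteq> v}
      \<subseteq> (\<lambda>(u, v). cmod (cinner u v)) ` (C \<times> C)"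
    by auto
  then show "finite {cmod (cinner u v) |u v. u \<in> C \<and> v \<in> C \<and> u \<noteq> v}"
    by (rule finite_subset) (use assms(1) in simp)
qed (use assms in blast)+

theorem corollary1:
  fixes A :: "'a::{field,finite} \<Rightarrow> 'a"
  assumes "alltop A"
  shows "signal_set (alltop_set A) (CARD('a)^2 + CARD('a)) CARD('a)
         \<and> I_max (alltop_set A) = 1 / sqrt (real CARD('a))"
proof
  show "signal_set (alltop_set A) (CARD('a)^2 + CARD('a)) CARD('a)"
    unfolding signal_set_def using card_alltop_set vnorm_alltop_set assms by blast
  show "I_max (alltop_set A) = 1 / sqrt (real CARD('a))"
  proof (rule I_max_eqI)
    show "basis_vec 0 \<in> alltop_set A" "alltop_vec A 0 0 \<in> alltop_set A"
      by (auto simp: alltop_set_eq)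
    show "basis_vec 0 \<noteq> alltop_vec A 0 0"
      using alltop_vec_neq_basis_vec by metis
    show "cmod (cinner (basis_vec 0) (alltop_vec A 0 0)) = 1 / sqrt (real CARD('a))"
      by (simp add: norm_alltop_vec_apply)
  qed (simp_all add: alltop_set_eq norm_cinner_alltop_set_le[OF assms])
qed


end
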